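(* Let $\mathcal{S}$ be a sound saturation system and let $\mathcal{C}$ be one of the clause sets $\mathcal{X}_m$ or $\mathcal{Y}_{m,n}$ with natural numbers $0<n<m$. Then $\mathcal{S}+\mathrm{IND}^R_{\mathrm{PF}}(\mathrm{Open}(L(\mathcal{C})))$ does not refute $\mathcal{C}$.
   Context: Language of linear arithmetic $\{0/0,s/1,p/1,+/2\}$. $\mathcal{T}$ has axioms (universally closed) $0\neq s(x)$, $p(0)=0$, $p(s(x))=x$, $x+0=x$, $x+s(y)=s(x+y)$; $\mathcal{T}'$ is $\mathcal{T}$ plus $x\neq0\to x=s(p(x))$, $x+y=y+x$, $(x+y)+z=x+(y+z)$, $x+y=x+z\to y=z$. For $m\in\mathbb{N}$ and a term $t$, $m\cdot t$ is $t+(t+\cdots+(t+t)\cdots)$ ($m$ copies) and $s^n$ is $n$-fold $s$. $C_m=\forall x,y(m\cdot x=m\cdot y\to x=y)$, $D_{m,n}=\forall x,y\,(s^n(m\cdot x)\neq m\cdot y)$. $\mathcal{X}_m=\mathit{CNF}(\mathit{sk}^\exists(\mathcal{T}'+\neg C_m))$, $\mathcal{Y}_{m,n}=\mathit{CNF}(\mathit{sk}^\exists(\mathcal{T}'+\neg D_{m,n}))$, where $\mathit{sk}^\exists$ is existential Skolemization with canonical Skolem symbols (a strong quantifier $QxA$ with free variables $\vec y$ is replaced by $\mathfrak{s}_{QxA}(\vec y)$, a new function symbol indexed by $QxA$; here only new constants arise) and $\mathit{CNF}$ gives clause sets of conjunctive normal forms. $L(\mathcal{C})$ = symbols occurring in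 $\mathcal{C}$; $\mathrm{Open}(L)$ = quantifier-free $L$ formulas. $I_x\varphi=\forall\vec z(\varphi(0,\vec z)\wedge\forall x(\varphi(x,\vec z)\to\varphi(s(x),\vec z))\to\forall x\varphi(x,\vec z))$. Saturation systems: sets of rules $\mathcal{C}/\mathcal{D}$ ($\mathcal{C}$ clause set, $\mathcal{D}$ finite clause set), $+$ = union; a deduction from $\mathcal{C}_0$ is $\mathcal{D}_0=\mathcal{C}_0,\dots,\mathcal{D}_k$ with $\mathcal{D}_{i+1}=\mathcal{D}_i\cup\mathcal{B}_i$ for a rule $\mathcal{D}_i/\mathcal{B}_i$; a refutation has the empty clause in $\mathcal{D}_k$. Sound: any clause $C$ derivable from $\mathcal{C}_0$ has $L(C)\subseteq L(\mathcal{C}_0)$ and $\mathcal{C}_0\models C$. $\mathrm{IND}^R_{\mathrm{PF}}(\Gamma)$ is the set of rules $\mathcal{C}'/\mathit{CNF}(\mathit{sk}^\exists(I_x\varphi(x,\vec t)))$ for every clause set $\mathcal{C}'$, every $\varphi(x,\vec z)\in\Gamma$ and every vector $\vec t$ of ground $L(\mathcal{C}')$ terms. *)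

theory Defs
  imports Main "HOL-Library.FSet"
begin

datatype 'f trm = Var nat | Fn 'f "'f trm list"

datatype 'f fm =
    Bot
  | Eq "'f trm" "'f trm"
  | Rel string "'f trm list"
  | Neg "'f fm"
  | Conj "'f fm" "'f fm"
  | Disj "'f fm" "'f fm"
  | Imp "'f fm" "'f fm"
  | All nat "'f fm"
  | Ex nat "'f fm"

text \<open>Function symbols: named symbols and canonical Skolem symbols indexed by
  the quantified formula QxA they replace.\<close>
datatype sym = Named string | Sk "sym fm"

datatype 'f atom = Equ "'f trm" "'f trm" | Pred string "'f trm list"
datatype 'f lit = Pos "'f atom" | NegL "'f atom"

type_synonym clause = "sym lit fset"

text \<open>Non-logical symbols of a language (equality is logical).\<close>
datatype lsym = FS sym | PS string

primrec tvars :: "'f trm \<Rightarrow> nat set" where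
  "tvars (Var x) = {x}"
| "tvars (Fn f ts) = \<Union> (set (map tvars ts))"

primrec tsyms :: "'f trm \<Rightarrow> 'f set" where
  "tsyms (Var x) = {}"
| "tsyms (Fn f ts) = insert f (\<Union> (set (map tsyms ts)))"

primrec tsubst :: "(nat \<Rightarrow> 'f trm) \<Rightarrow> 'f trm \<Rightarrow> 'f trm" where
  "tsubst \<sigma> (Var x) = \<sigma> x"
| "tsubst \<sigma> (Fn f ts) = Fn f (map (tsubst \<sigma>) ts)"

primrec fv :: "'f fm \<Rightarrow> nat set" where
  "fv Bot = {}"
| "fv (Eq s t) = tvars s \<union> tvars t"
| "fv (Rel r ts) = \<Union> (set (map tvars ts))"
| "fv (Neg A) = fv A"
| "fv (Conj A B) = fv A \<union> fv B"
| "fv (Disj A B) = fv A \<union> fv B"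
| "fv (Imp A B) = fv A \<union> fv B"
| "fv (All x A) = fv A - {x}"
| "fv (Ex x A) = fv A - {x}"

primrec qfree :: "'f fm \<Rightarrow> bool" where
  "qfree Bot = True"
| "qfree (Eq s t) = True"
| "qfree (Rel r ts) = True"
| "qfree (Neg A) = qfree A"
| "qfree (Conj A B) = (qfree A \<and> qfree B)"
| "qfree (Disj A B) = (qfree A \<and> qfree B)"
| "qfree (Imp A B) = (qfree A \<and> qfree B)"
| "qfree (All x A) = False"
| "qfree (Ex x A) = False"

primrec fsyms :: "sym fm \<Rightarrow> lsym set" where
  "fsyms Bot = {}"
| "fsyms (Eq s t) = FS ` (tsyms s \<union> tsyms t)"
| "fsyms (Rel r ts) = insert (PS r) (FS ` \<Union> (set (map tsyms ts)))"
| "fsyms (Neg A) = fsyms A"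
| "fsyms (Conj A B) = fsyms A \<union> fsyms B"
| "fsyms (Disj A B) = fsyms A \<union> fsyms B"
| "fsyms (Imp A B) = fsyms A \<union> fsyms B"
| "fsyms (All x A) = fsyms A"
| "fsyms (Ex x A) = fsyms A"

definition svars :: "(nat \<Rightarrow> 'f trm) \<Rightarrow> nat set \<Rightarrow> nat set" where
  "svars \<sigma> V = (\<Union>v\<in>V. tvars (\<sigma> v))"

definition bvar :: "(nat \<Rightarrow> 'f trm) \<Rightarrow> nat \<Rightarrow> 'f fm \<Rightarrow> nat" where
  "bvar \<sigma> x A = (let V = svars \<sigma> (fv A - {x}) in
      if x \<in> V then Suc (Max (insert x V)) else x)"

primrec fsubst :: "(nat \<Rightarrow> 'f trm) \<Rightarrow> 'f fm \<Rightarrow> 'f fm" where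
  "fsubst \<sigma> Bot = Bot"
| "fsubst \<sigma> (Eq s t) = Eq (tsubst \<sigma> s) (tsubst \<sigma> t)"
| "fsubst \<sigma> (Rel r ts) = Rel r (map (tsubst \<sigma>) ts)"
| "fsubst \<sigma> (Neg A) = Neg (fsubst \<sigma> A)"
| "fsubst \<sigma> (Conj A B) = Conj (fsubst \<sigma> A) (fsubst \<sigma> B)"
| "fsubst \<sigma> (Disj A B) = Disj (fsubst \<sigma> A) (fsubst \<sigma> B)"
| "fsubst \<sigma> (Imp A B) = Imp (fsubst \<sigma> A) (fsubst \<sigma> B)"
| "fsubst \<sigma> (All x A) = All (bvar \<sigma> x A) (fsubst (\<sigma>(x := Var (bvar \<sigma> x A))) A)"
| "fsubst \<sigma> (Ex x A) = Ex (bvar \<sigma> x A) (fsubst (\<sigma>(x := Var (bvar \<sigma> x A))) A)"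

definition skt :: "(nat \<Rightarrow> sym trm) \<Rightarrow> sym fm \<Rightarrow> sym trm" where
  "skt \<sigma> Q = Fn (Sk (fsubst \<sigma> Q)) (map Var (sorted_list_of_set (fv (fsubst \<sigma> Q))))"

text \<open>sk p sigma A: p = True means A occurs positively (as an assumption of
  the refutation); strong quantifiers are positive \<exists> and negative \<forall>.\<close>
primrec sk :: "bool \<Rightarrow> (nat \<Rightarrow> sym trm) \<Rightarrow> sym fm \<Rightarrow> sym fm" where
  "sk p \<sigma> Bot = Bot"
| "sk p \<sigma> (Eq s t) = Eq (tsubst \<sigma> s) (tsubst \<sigma> t)"
| "sk p \<sigma> (Rel r ts) = Rel r (map (tsubst \<sigma>) ts)"
| "sk p \<sigma> (Neg A) = Neg (sk (\<not> p) \<sigma> A)"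
| "sk p \<sigma> (Conj A B) = Conj (sk p \<sigma> A) (sk p \<sigma> B)"
| "sk p \<sigma> (Disj A B) = Disj (sk p \<sigma> A) (sk p \<sigma> B)"
| "sk p \<sigma> (Imp A B) = Imp (sk (\<not> p) \<sigma> A) (sk p \<sigma> B)"
| "sk p \<sigma> (All x A) = (if p
      then All (bvar \<sigma> x A) (sk p (\<sigma>(x := Var (bvar \<sigma> x A))) A)
      else sk p (\<sigma>(x := skt \<sigma> (All x A))) A)"
| "sk p \<sigma> (Ex x A) = (if p
      then sk p (\<sigma>(x := skt \<sigma> (Ex x A))) A
      else Ex (bvar \<sigma> x A) (sk p (\<sigma>(x := Var (bvar \<sigma> x A))) A))"

definition skE :: "sym fm \<Rightarrow> sym fm" where
  "skE A = sk True Var A"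

definition dist :: "'f lit fset set \<Rightarrow> 'f lit fset set \<Rightarrow> 'f lit fset set" where
  "dist S T = {c |\<union>| d | c d. c \<in> S \<and> d \<in> T}"

text \<open>Clause form of a formula without strong quantifiers: the (weak) quantifier at
  tree position k gets the variable k (so bound variables are renamed apart and then
  dropped), and the matrix is brought into CNF by distributivity.\<close>
primrec cls :: "bool \<Rightarrow> (nat \<Rightarrow> 'f trm) \<Rightarrow> nat \<Rightarrow> 'f fm \<Rightarrow> 'f lit fset set" where
  "cls p \<sigma> k Bot = (if p then {{||}} else {})"
| "cls p \<sigma> k (Eq s t) =
     {{|(if p then Pos else NegL) (Equ (tsubst \<sigma> s) (tsubst \<sigma> t))|}}"
| "cls p \<sigma> k (Rel r ts) =
     {{|(if p then Pos else NegL) (Pred r (map (tsubst \<sigma>) ts))|}}"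
| "cls p \<sigma> k (Neg A) = cls (\<not> p) \<sigma> (2*k+1) A"
| "cls p \<sigma> k (Conj A B) = (if p then cls p \<sigma> (2*k+1) A \<union> cls p \<sigma> (2*k+2) B
      else dist (cls p \<sigma> (2*k+1) A) (cls p \<sigma> (2*k+2) B))"
| "cls p \<sigma> k (Disj A B) = (if p then dist (cls p \<sigma> (2*k+1) A) (cls p \<sigma> (2*k+2) B)
      else cls p \<sigma> (2*k+1) A \<union> cls p \<sigma> (2*k+2) B)"
| "cls p \<sigma> k (Imp A B) = (if p then dist (cls False \<sigma> (2*k+1) A) (cls True \<sigma> (2*k+2) B)
      else cls True \<sigma> (2*k+1) A \<union> cls False \<sigma> (2*k+2) B)"
| "cls p \<sigma> k (All x A) = cls p (\<sigma>(x := Var k)) (2*k+1) A"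
| "cls p \<sigma> k (Ex x A) = cls p (\<sigma>(x := Var k)) (2*k+1) A"

definition CNF :: "'f fm \<Rightarrow> 'f lit fset set" where
  "CNF A = cls True Var 0 A"

definition CNFsk :: "sym fm set \<Rightarrow> clause set" where
  "CNFsk \<Phi> = (\<Union>A\<in>\<Phi>. CNF (skE A))"

primrec asyms :: "sym atom \<Rightarrow> lsym set" where
  "asyms (Equ s t) = FS ` (tsyms s \<union> tsyms t)"
| "asyms (Pred r ts) = insert (PS r) (FS ` \<Union> (set (map tsyms ts)))"

primrec lsyms :: "sym lit \<Rightarrow> lsym set" where
  "lsyms (Pos a) = asyms a"
| "lsyms (NegL a) = asyms a"

definition Lc :: "clause \<Rightarrow> lsym set" where
  "Lc C = (\<Union>l\<in>fset C. lsyms l)"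

definition L :: "clause set \<Rightarrow> lsym set" where
  "L \<C> = (\<Union>C\<in>\<C>. Lc C)"

definition Open :: "lsym set \<Rightarrow> sym fm set" where
  "Open \<L> = {\<phi>. qfree \<phi> \<and> fsyms \<phi> \<subseteq> \<L>}"

definition ground_term_of :: "lsym set \<Rightarrow> sym trm \<Rightarrow> bool" where
  "ground_term_of \<L> t \<longleftrightarrow> tvars t = {} \<and> FS ` tsyms t \<subseteq> \<L>"

text \<open>Structures with domain a nonempty set of natural numbers (for the countable
  languages at hand this yields the same consequence relation, by Loewenheim-Skolem).\<close>
definition is_struct :: "nat set \<Rightarrow> (sym \<Rightarrow> nat list \<Rightarrow> nat) \<Rightarrow> bool" where
  "is_struct D F \<longleftrightarrow> D \<noteq> {} \<and> (\<forall>f xs. set xs \<subseteq> D \<longrightarrow> F f xs \<in> D)"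

primrec teval :: "(sym \<Rightarrow> nat list \<Rightarrow> nat) \<Rightarrow> (nat \<Rightarrow> nat) \<Rightarrow> sym trm \<Rightarrow> nat" where
  "teval F \<beta> (Var x) = \<beta> x"
| "teval F \<beta> (Fn f ts) = F f (map (teval F \<beta>) ts)"

primrec aeval :: "(sym \<Rightarrow> nat list \<Rightarrow> nat) \<Rightarrow> (string \<Rightarrow> nat list \<Rightarrow> bool) \<Rightarrow> (nat \<Rightarrow> nat)
    \<Rightarrow> sym atom \<Rightarrow> bool" where
  "aeval F P \<beta> (Equ s t) = (teval F \<beta> s = teval F \<beta> t)"
| "aeval F P \<beta> (Pred r ts) = P r (map (teval F \<beta>) ts)"

primrec leval :: "(sym \<Rightarrow> nat list \<Rightarrow> nat) \<Rightarrow> (string \<Rightarrow> nat list \<Rightarrow> bool) \<Rightarrow> (nat \<Rightarrow> nat)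
    \<Rightarrow> sym lit \<Rightarrow> bool" where
  "leval F P \<beta> (Pos a) = aeval F P \<beta> a"
| "leval F P \<beta> (NegL a) = (\<not> aeval F P \<beta> a)"

definition csat :: "nat set \<Rightarrow> (sym \<Rightarrow> nat list \<Rightarrow> nat) \<Rightarrow> (string \<Rightarrow> nat list \<Rightarrow> bool)
    \<Rightarrow> clause \<Rightarrow> bool" where
  "csat D F P C \<longleftrightarrow> (\<forall>\<beta>. range \<beta> \<subseteq> D \<longrightarrow> (\<exists>l\<in>fset C. leval F P \<beta> l))"

definition entails :: "clause set \<Rightarrow> clause \<Rightarrow> bool" where
  "entails \<C> C \<longleftrightarrow> (\<forall>D F P. is_struct D F \<longrightarrow> (\<forall>C'\<in>\<C>. csat D F P C') \<longrightarrow> csat D F P C)"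

type_synonym rule = "clause set \<times> clause set"

definition saturation_system :: "rule set \<Rightarrow> bool" where
  "saturation_system \<S> \<longleftrightarrow> (\<forall>(\<C>, \<D>)\<in>\<S>. finite \<D>)"

definition deduction :: "rule set \<Rightarrow> clause set \<Rightarrow> clause set list \<Rightarrow> bool" where
  "deduction \<S> \<C>0 Ds \<longleftrightarrow> Ds \<noteq> [] \<and> hd Ds = \<C>0 \<and>
     (\<forall>i. Suc i < length Ds \<longrightarrow> (\<exists>B. (Ds ! i, B) \<in> \<S> \<and> Ds ! Suc i = Ds ! i \<union> B))"

definition derivable :: "rule set \<Rightarrow> clause set \<Rightarrow> clause \<Rightarrow> bool" where
  "derivable \<S> \<C>0 C \<longleftrightarrow> (\<exists>Ds. deduction \<S> \<C>0 Ds \<and> C \<in> last Ds)"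

definition refutes :: "rule set \<Rightarrow> clause set \<Rightarrow> bool" where
  "refutes \<S> \<C>0 \<longleftrightarrow> derivable \<S> \<C>0 {||}"

definition sound :: "rule set \<Rightarrow> bool" where
  "sound \<S> \<longleftrightarrow> (\<forall>\<C>0 C. derivable \<S> \<C>0 C \<longrightarrow> Lc C \<subseteq> L \<C>0 \<and> entails \<C>0 C)"

definition zero :: "sym trm" where "zero = Fn (Named ''0'') []"
definition suc :: "sym trm \<Rightarrow> sym trm" where "suc t = Fn (Named ''s'') [t]"
definition pre :: "sym trm \<Rightarrow> sym trm" where "pre t = Fn (Named ''p'') [t]"
definition plus :: "sym trm \<Rightarrow> sym trm \<Rightarrow> sym trm" where "plus t u = Fn (Named ''+'') [t, u]"

fun mul :: "nat \<Rightarrow> sym trm \<Rightarrow> sym trm" where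
  "mul 0 t = zero"
| "mul (Suc 0) t = t"
| "mul (Suc (Suc k)) t = plus t (mul (Suc k) t)"

definition sucs :: "nat \<Rightarrow> sym trm \<Rightarrow> sym trm" where
  "sucs n t = (suc ^^ n) t"

abbreviation "vx \<equiv> Var 0 :: sym trm"
abbreviation "vy \<equiv> Var 1 :: sym trm"
abbreviation "vz \<equiv> Var 2 :: sym trm"

definition T_axioms :: "sym fm set" where
  "T_axioms = {
     All 0 (Neg (Eq zero (suc vx))),
     Eq (pre zero) zero,
     All 0 (Eq (pre (suc vx)) vx),
     All 0 (Eq (plus vx zero) vx),
     All 0 (All 1 (Eq (plus vx (suc vy)) (suc (plus vx vy))))}"

definition T'_axioms :: "sym fm set" where
  "T'_axioms = T_axioms \<union> {
     All 0 (Imp (Neg (Eq vx zero)) (Eq vx (suc (pre vx)))),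
     All 0 (All 1 (Eq (plus vx vy) (plus vy vx))),
     All 0 (All 1 (All 2 (Eq (plus (plus vx vy) vz) (plus vx (plus vy vz))))),
     All 0 (All 1 (All 2 (Imp (Eq (plus vx vy) (plus vx vz)) (Eq vy vz))))}"

definition C_fm :: "nat \<Rightarrow> sym fm" where
  "C_fm m = All 0 (All 1 (Imp (Eq (mul m vx) (mul m vy)) (Eq vx vy)))"

definition D_fm :: "nat \<Rightarrow> nat \<Rightarrow> sym fm" where
  "D_fm m n = All 0 (All 1 (Neg (Eq (sucs n (mul m vx)) (mul m vy))))"

definition X :: "nat \<Rightarrow> clause set" where
  "X m = CNFsk (T'_axioms \<union> {Neg (C_fm m)})"

definition Y :: "nat \<Rightarrow> nat \<Rightarrow> clause set" where
  "Y m n = CNFsk (T'_axioms \<union> {Neg (D_fm m n)})"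

text \<open>I_x\<phi>(x, t): here \<sigma> assigns the ground terms t to the parameters z of \<phi>.\<close>
definition ind_fm :: "nat \<Rightarrow> sym fm \<Rightarrow> (nat \<Rightarrow> sym trm) \<Rightarrow> sym fm" where
  "ind_fm x \<phi> \<sigma> =
     Imp (Conj (fsubst (\<sigma>(x := zero)) \<phi>)
               (All x (Imp (fsubst (\<sigma>(x := Var x)) \<phi>) (fsubst (\<sigma>(x := suc (Var x))) \<phi>))))
         (All x (fsubst (\<sigma>(x := Var x)) \<phi>))"

definition IND_PF :: "sym fm set \<Rightarrow> rule set" where
  "IND_PF \<Gamma> = {(\<C>', CNF (skE (ind_fm x \<phi> \<sigma>))) | \<C>' x \<phi> \<sigma>.
      \<phi> \<in> \<Gamma> \<and> (\<forall>z\<in>fv \<phi> - {x}. ground_term_of (L \<C>') (\<sigma> z))}"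

end

theory Submission
  imports Defs "HOL-Library.Countable_Set" "HOL-Library.More_List"
begin

text \<open>A sound saturation system only derives consequences, and once the Skolem constants are
  interpreted canonically the clauses of an induction rule hold in every structure satisfying that
  induction instance. So it suffices to find one structure satisfying \<open>T'\<close>, \<open>\<not>C\<^sub>m\<close> (resp.
  \<open>\<not>D\<^sub>m\<^sub>,\<^sub>n\<close>) and open induction. Its elements are \<open>a X + k / m + r \<tau>\<close> with \<open>X\<close> infinite and
  \<open>\<tau>\<close> of order \<open>m\<close>. For large \<open>x\<close>, every term in \<open>x\<close> is an affine function \<open>\<alpha> x + c\<close>, so an
  atom in \<open>x\<close> is either constant or has at most one solution on each line \<open>{a X + k / m + r \<tau> | k}\<close>.
  Hence an open formula takes one generic truth value on all lines, up to finitely many exceptions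
  per line. Induction along the standard numbers makes this value true, and the induction step
  would spread a nonstandard counterexample downwards along its line to infinitely many
  exceptions.\<close>

primrec holds :: "(sym \<Rightarrow> nat list \<Rightarrow> nat) \<Rightarrow> (string \<Rightarrow> nat list \<Rightarrow> bool) \<Rightarrow> (nat \<Rightarrow> nat)
    \<Rightarrow> sym fm \<Rightarrow> bool" where
  "holds F P \<rho> Bot = False"
| "holds F P \<rho> (Eq s t) = (teval F \<rho> s = teval F \<rho> t)"
| "holds F P \<rho> (Rel r ts) = P r (map (teval F \<rho>) ts)"
| "holds F P \<rho> (Neg A) = (\<not> holds F P \<rho> A)"
| "holds F P \<rho> (Conj A B) = (holds F P \<rho> A \<and> holds F P \<rho> B)"
| "holds F P \<rho> (Disj A B) = (holds F P \<rho> A \<or> holds F P \<rho> B)"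
| "holds F P \<rho> (Imp A B) = (holds F P \<rho> A \<longrightarrow> holds F P \<rho> B)"
| "holds F P \<rho> (All x A) = (\<forall>v. holds F P (\<rho>(x := v)) A)"
| "holds F P \<rho> (Ex x A) = (\<exists>v. holds F P (\<rho>(x := v)) A)"

lemma teval_tsubst: "teval F \<rho> (tsubst \<sigma> t) = teval F (\<lambda>y. teval F \<rho> (\<sigma> y)) t"
  by (induction t) (simp_all cong: map_cong)

lemma teval_cong: "(\<And>y. y \<in> tvars t \<Longrightarrow> \<rho> y = \<rho>' y) \<Longrightarrow> teval F \<rho> t = teval F \<rho>' t"
proof (induction t)
  case (Fn f ts)
  then have "map (teval F \<rho>) ts = map (teval F \<rho>') ts" by (intro map_cong) auto
  then show ?case by (simp only: teval.simps)
qed simp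

lemma teval_cong_syms: "(\<And>g. g \<in> tsyms t \<Longrightarrow> F g = G g) \<Longrightarrow> teval F \<rho> t = teval G \<rho> t"
proof (induction t)
  case (Fn f ts)
  then have "map (teval F \<rho>) ts = map (teval G \<rho>) ts" by (intro map_cong) auto
  moreover have "F f = G f" using Fn.prems by simp
  ultimately show ?case by (simp only: teval.simps)
qed simp

lemma holds_cong: "(\<And>y. y \<in> fv A \<Longrightarrow> \<rho> y = \<rho>' y) \<Longrightarrow> holds F P \<rho> A = holds F P \<rho>' A"
proof (induction A arbitrary: \<rho> \<rho>')
  case (Eq s t)
  have "teval F \<rho> s = teval F \<rho>' s" "teval F \<rho> t = teval F \<rho>' t"
    by (rule teval_cong, simp add: Eq)+
  then show ?case by simp
next
  case (Rel r ts)
  then have "map (teval F \<rho>) ts = map (teval F \<rho>') ts" by (intro map_cong teval_cong) auto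
  then show ?case by (simp only: holds.simps)
next
  case (Neg A)
  have "holds F P \<rho> A = holds F P \<rho>' A" by (rule Neg.IH) (use Neg.prems in auto)
  then show ?case by simp
next
  case (Conj A B)
  have "holds F P \<rho> A = holds F P \<rho>' A" "holds F P \<rho> B = holds F P \<rho>' B"
    by (rule Conj.IH; use Conj.prems in auto)+
  then show ?case by simp
next
  case (Disj A B)
  have "holds F P \<rho> A = holds F P \<rho>' A" "holds F P \<rho> B = holds F P \<rho>' B"
    by (rule Disj.IH; use Disj.prems in auto)+
  then show ?case by simp
next
  case (Imp A B)
  have "holds F P \<rho> A = holds F P \<rho>' A" "holds F P \<rho> B = holds F P \<rho>' B"
    by (rule Imp.IH; use Imp.prems in auto)+
  then show ?case by simp
next
  case (All x A)
  have "holds F P (\<rho>(x := v)) A = holds F P (\<rho>'(x := v)) A" for v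
    by (rule All.IH) (use All.prems in auto)
  then show ?case by simp
next
  case (Ex x A)
  have "holds F P (\<rho>(x := v)) A = holds F P (\<rho>'(x := v)) A" for v
    by (rule Ex.IH) (use Ex.prems in auto)
  then show ?case by simp
qed simp

lemma holds_cong_syms: "(\<And>g. FS g \<in> fsyms A \<Longrightarrow> F g = G g) \<Longrightarrow> holds F P \<rho> A = holds G P \<rho> A"
proof (induction A arbitrary: \<rho>)
  case (Eq s t)
  have "teval F \<rho> s = teval G \<rho> s" "teval F \<rho> t = teval G \<rho> t"
    by (rule teval_cong_syms, simp add: Eq)+
  then show ?case by simp
next
  case (Rel r ts)
  then have "map (teval F \<rho>) ts = map (teval G \<rho>) ts" by (intro map_cong teval_cong_syms) auto
  then show ?case by (simp only: holds.simps)
qed simp_all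

lemma finite_tvars: "finite (tvars t)"
  by (induction t) auto

lemma finite_fv: "finite (fv A)"
  by (induction A) (auto simp: finite_tvars)

lemma bvar_fresh: "bvar \<sigma> x A \<notin> svars \<sigma> (fv A - {x})"
proof -
  let ?V = "svars \<sigma> (fv A - {x})"
  have "finite ?V" by (simp add: svars_def finite_tvars finite_fv)
  then have "Suc (Max (insert x ?V)) \<notin> ?V"
    using Max_ge[of "insert x ?V"] by (metis Suc_n_not_le_n finite_insert insertCI)
  then show ?thesis by (simp add: bvar_def Let_def)
qed

lemma holds_rename_bvar:
  assumes "b = bvar \<sigma> x A"
  shows "holds F P (\<lambda>y. teval F (\<rho>(b := v)) ((\<sigma>(x := Var b)) y)) A
       = holds F P ((\<lambda>y. teval F \<rho> (\<sigma> y))(x := v)) A"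
proof (rule holds_cong)
  fix y assume y: "y \<in> fv A"
  show "teval F (\<rho>(b := v)) ((\<sigma>(x := Var b)) y) = ((\<lambda>y. teval F \<rho> (\<sigma> y))(x := v)) y"
  proof (cases "y = x")
    case False
    then have "b \<notin> tvars (\<sigma> y)" using bvar_fresh[of \<sigma> x A] y assms by (auto simp: svars_def)
    then have "teval F (\<rho>(b := v)) (\<sigma> y) = teval F \<rho> (\<sigma> y)"
      by (intro teval_cong) auto
    then show ?thesis using False by simp
  qed simp
qed

lemma holds_fsubst: "holds F P \<rho> (fsubst \<sigma> A) = holds F P (\<lambda>y. teval F \<rho> (\<sigma> y)) A"
proof (induction A arbitrary: \<sigma> \<rho>)
  case (Eq s t) then show ?case by (simp add: teval_tsubst)
next
  case (Rel r ts) then show ?case by (simp add: teval_tsubst comp_def)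
next
  case (All x A)
  show ?case by (simp only: fsubst.simps holds.simps All.IH holds_rename_bvar[OF refl])
next
  case (Ex x A)
  show ?case by (simp only: fsubst.simps holds.simps Ex.IH holds_rename_bvar[OF refl])
qed auto

lemma tvars_tsubst: "tvars (tsubst \<sigma> t) = svars \<sigma> (tvars t)"
  by (induction t) (auto simp: svars_def)

lemma fv_fsubst: "fv (fsubst \<sigma> A) = svars \<sigma> (fv A)"
proof (induction A arbitrary: \<sigma>)
  case (All x A)
  have "svars (\<sigma>(x := Var (bvar \<sigma> x A))) (fv A) - {bvar \<sigma> x A} = svars \<sigma> (fv A - {x})"
    using bvar_fresh[of \<sigma> x A] by (auto simp: svars_def split: if_splits)
  then show ?case by (simp only: fsubst.simps fv.simps All.IH)
next
  case (Ex x A)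
  have "svars (\<sigma>(x := Var (bvar \<sigma> x A))) (fv A) - {bvar \<sigma> x A} = svars \<sigma> (fv A - {x})"
    using bvar_fresh[of \<sigma> x A] by (auto simp: svars_def split: if_splits)
  then show ?case by (simp only: fsubst.simps fv.simps Ex.IH)
qed (auto simp: svars_def tvars_tsubst)

lemma qfree_fsubst: "qfree A \<Longrightarrow> qfree (fsubst \<sigma> A)"
  by (induction A arbitrary: \<sigma>) auto

lemma holds_fsubst_params:
  assumes "\<And>z. z \<in> fv \<phi> - {x} \<Longrightarrow> tvars (\<sigma> z) = {}"
  shows "holds F P \<rho> (fsubst (\<sigma>(x := t)) \<phi>)
    = holds F P ((\<lambda>z. teval F \<rho>' (\<sigma> z))(x := teval F \<rho> t)) \<phi>"
proof -
  have "holds F P \<rho> (fsubst (\<sigma>(x := t)) \<phi>) = holds F P (\<lambda>z. teval F \<rho> ((\<sigma>(x := t)) z)) \<phi>"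
    by (rule holds_fsubst)
  also have "\<dots> = holds F P ((\<lambda>z. teval F \<rho>' (\<sigma> z))(x := teval F \<rho> t)) \<phi>"
    using assms by (intro holds_cong) (auto intro: teval_cong)
  finally show ?thesis .
qed

lemma tvars_mul: "tvars (mul j t) = (if j = 0 then {} else tvars t)"
  by (induction j t rule: mul.induct) (auto simp: zero_def plus_def)

lemma tvars_sucs: "tvars (sucs n t) = tvars t"
  by (induction n) (auto simp: sucs_def suc_def)

section \<open>Soundness of the clause form\<close>

text \<open>\<open>holds_pol F P p \<rho> A\<close>: \<open>A\<close> has truth value \<open>p\<close> when every quantifier is read as a
  universal quantifier over the clause variables. This is the right semantics for \<open>cls\<close>,
  which drops all quantifiers, on formulas whose quantifiers are all weak.\<close>

primrec holds_pol :: "(sym \<Rightarrow> nat list \<Rightarrow> nat) \<Rightarrow> (string \<Rightarrow> nat list \<Rightarrow> bool) \<Rightarrow> bool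
    \<Rightarrow> (nat \<Rightarrow> nat) \<Rightarrow> sym fm \<Rightarrow> bool" where
  "holds_pol F P p \<rho> Bot = (\<not> p)"
| "holds_pol F P p \<rho> (Eq s t) = (p = (teval F \<rho> s = teval F \<rho> t))"
| "holds_pol F P p \<rho> (Rel r ts) = (p = P r (map (teval F \<rho>) ts))"
| "holds_pol F P p \<rho> (Neg A) = holds_pol F P (\<not> p) \<rho> A"
| "holds_pol F P p \<rho> (Conj A B) = (if p then holds_pol F P p \<rho> A \<and> holds_pol F P p \<rho> B
      else holds_pol F P p \<rho> A \<or> holds_pol F P p \<rho> B)"
| "holds_pol F P p \<rho> (Disj A B) = (if p then holds_pol F P p \<rho> A \<or> holds_pol F P p \<rho> B
      else holds_pol F P p \<rho> A \<and> holds_pol F P p \<rho> B)"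
| "holds_pol F P p \<rho> (Imp A B) = (if p then holds_pol F P False \<rho> A \<or> holds_pol F P True \<rho> B
      else holds_pol F P True \<rho> A \<and> holds_pol F P False \<rho> B)"
| "holds_pol F P p \<rho> (All x A) = (\<forall>v. holds_pol F P p (\<rho>(x := v)) A)"
| "holds_pol F P p \<rho> (Ex x A) = (\<forall>v. holds_pol F P p (\<rho>(x := v)) A)"

lemma dist_clause_true:
  assumes "C \<in> dist S T" and "(\<forall>c\<in>S. \<exists>l\<in>fset c. Q l) \<or> (\<forall>d\<in>T. \<exists>l\<in>fset d. Q l)"
  shows "\<exists>l\<in>fset C. Q l"
  using assms by (auto simp: dist_def)

lemma cls_sound:
  "holds_pol F P p (\<lambda>y. teval F \<beta> (\<sigma> y)) A \<Longrightarrow> C \<in> cls p \<sigma> k A \<Longrightarrow> \<exists>l\<in>fset C. leval F P \<beta> l"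
proof (induction A arbitrary: p \<sigma> k C)
  case Bot then show ?case by (cases p) simp_all
next
  case (Eq s t) then show ?case by (cases p) (simp_all add: teval_tsubst)
next
  case (Rel r ts) then show ?case by (cases p) (simp_all add: teval_tsubst comp_def)
next
  case (Neg A) then show ?case by simp
next
  case (Conj A B)
  then show ?case
    by (cases p) (simp_all, blast, (rule dist_clause_true, assumption, blast))
next
  case (Disj A B)
  then show ?case
    by (cases p) (simp_all, (rule dist_clause_true, assumption, blast), blast)
next
  case (Imp A B)
  then show ?case
    by (cases p) (simp_all, (rule dist_clause_true, assumption, blast), blast)
next
  case (All x A)
  have "(\<lambda>y. teval F \<beta> ((\<sigma>(x := Var k)) y)) = (\<lambda>y. teval F \<beta> (\<sigma> y))(x := \<beta> k)"
    by auto
  then show ?case using All.IH All.prems by (simp only: cls.simps holds_pol.simps) metis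
next
  case (Ex x A)
  have "(\<lambda>y. teval F \<beta> ((\<sigma>(x := Var k)) y)) = (\<lambda>y. teval F \<beta> (\<sigma> y))(x := \<beta> k)"
    by auto
  then show ?case using Ex.IH Ex.prems by (simp only: cls.simps holds_pol.simps) metis
qed

lemma csat_CNF:
  assumes "\<And>\<beta>. holds_pol F P True \<beta> A" and "C \<in> CNF A"
  shows "csat UNIV F P C"
  unfolding csat_def
proof (intro allI impI)
  fix \<beta> :: "nat \<Rightarrow> nat"
  have "holds_pol F P True (\<lambda>y. teval F \<beta> (Var y)) A" using assms(1) by simp
  then show "\<exists>l\<in>fset C. leval F P \<beta> l"
    using cls_sound assms(2) unfolding CNF_def by blast
qed

section \<open>Soundness of Skolemization\<close>

text \<open>\<open>sk_closed p \<sigma> A\<close>: every strong quantifier of \<open>A\<close> is a universal quantifier that becomes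
  closed under the pending substitution \<open>\<sigma>\<close>, so its Skolem symbol is a constant; existential
  quantifiers do not occur at all.\<close>

primrec sk_closed :: "bool \<Rightarrow> (nat \<Rightarrow> sym trm) \<Rightarrow> sym fm \<Rightarrow> bool" where
  "sk_closed p \<sigma> Bot = True"
| "sk_closed p \<sigma> (Eq s t) = True"
| "sk_closed p \<sigma> (Rel r ts) = True"
| "sk_closed p \<sigma> (Neg A) = sk_closed (\<not> p) \<sigma> A"
| "sk_closed p \<sigma> (Conj A B) = (sk_closed p \<sigma> A \<and> sk_closed p \<sigma> B)"
| "sk_closed p \<sigma> (Disj A B) = (sk_closed p \<sigma> A \<and> sk_closed p \<sigma> B)"
| "sk_closed p \<sigma> (Imp A B) = (sk_closed (\<not> p) \<sigma> A \<and> sk_closed p \<sigma> B)"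
| "sk_closed p \<sigma> (All x A) = (if p then sk_closed p (\<sigma>(x := Var (bvar \<sigma> x A))) A
      else fv (fsubst \<sigma> (All x A)) = {} \<and> sk_closed p (\<sigma>(x := skt \<sigma> (All x A))) A)"
| "sk_closed p \<sigma> (Ex x A) = False"

lemma sk_closed_qfree: "qfree A \<Longrightarrow> sk_closed p \<sigma> A"
  by (induction A arbitrary: p \<sigma>) auto

text \<open>The Skolem constant of a closed \<open>\<forall>b B\<close> denotes a counterexample to \<open>B\<close>, if there is one
  (the assignment \<open>\<lambda>_. 0\<close> is irrelevant since \<open>B\<close> has no other free variable). As \<open>B\<close> may itself
  contain Skolem symbols, the interpretation is built by iterating \<open>sk_step\<close>: the Skolem symbols
  in \<open>Q\<close> are smaller than \<open>Sk Q\<close>, so \<open>size g\<close> iterations settle the symbol \<open>g\<close>.\<close>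

definition sk_witness :: "(sym \<Rightarrow> nat list \<Rightarrow> nat) \<Rightarrow> (string \<Rightarrow> nat list \<Rightarrow> bool) \<Rightarrow> sym fm \<Rightarrow> nat"
  where "sk_witness G P Q =
    (case Q of All b B \<Rightarrow> (SOME v. \<not> holds G P ((\<lambda>_. 0)(b := v)) B) | _ \<Rightarrow> 0)"

definition sk_step :: "(sym \<Rightarrow> nat list \<Rightarrow> nat) \<Rightarrow> (string \<Rightarrow> nat list \<Rightarrow> bool)
    \<Rightarrow> (sym \<Rightarrow> nat list \<Rightarrow> nat) \<Rightarrow> sym \<Rightarrow> nat list \<Rightarrow> nat" where
  "sk_step F P G g = (case g of Sk Q \<Rightarrow> (\<lambda>_. sk_witness G P Q) | Named s \<Rightarrow> F (Named s))"

definition sk_expansion :: "(sym \<Rightarrow> nat list \<Rightarrow> nat) \<Rightarrow> (string \<Rightarrow> nat list \<Rightarrow> bool)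
    \<Rightarrow> sym \<Rightarrow> nat list \<Rightarrow> nat" where
  "sk_expansion F P g = (sk_step F P ^^ size g) F g"

lemma size_tsyms: "g \<in> tsyms t \<Longrightarrow> f g \<le> size_trm f t"
proof (induction t)
  case (Fn h ts)
  show ?case
  proof (cases "g = h")
    case False
    then obtain u where u: "u \<in> set ts" "g \<in> tsyms u" using Fn.prems by auto
    then have "f g \<le> size_trm f u" using Fn.IH by blast
    also have "\<dots> \<le> size_list (size_trm f) ts" using u(1) by (simp add: size_list_estimation')
    finally show ?thesis by simp
  qed simp
qed simp

lemma size_fsyms: "FS g \<in> fsyms A \<Longrightarrow> f g \<le> size_fm f A"
proof (induction A)
  case (Eq s t) then show ?case using size_tsyms[of g s f] size_tsyms[of g t f] by auto
next
  case (Rel r ts)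
  then obtain u where u: "u \<in> set ts" "g \<in> tsyms u" by auto
  then have "f g \<le> size_trm f u" using size_tsyms[of g u f] by blast
  also have "\<dots> \<le> size_list (size_trm f) ts" using u(1) by (simp add: size_list_estimation')
  finally show ?case by simp
qed auto

lemma sk_witness_cong: "(\<And>g. FS g \<in> fsyms Q \<Longrightarrow> G g = G' g) \<Longrightarrow> sk_witness G P Q = sk_witness G' P Q"
proof (cases Q)
  case (All b B)
  assume "\<And>g. FS g \<in> fsyms Q \<Longrightarrow> G g = G' g"
  then have "\<And>\<rho>. holds G P \<rho> B = holds G' P \<rho> B"
    using All by (intro holds_cong_syms) auto
  then show ?thesis using All by (simp add: sk_witness_def)
qed (simp_all add: sk_witness_def)

lemma sk_iter_Named: "(sk_step F P ^^ k) F (Named s) = F (Named s)"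
  by (cases k) (simp_all add: sk_step_def)

lemma sk_iter_stable: "size g \<le> k \<Longrightarrow> (sk_step F P ^^ k) F g = sk_expansion F P g"
proof (induction "size g" arbitrary: g k rule: less_induct)
  case less
  show ?case
  proof (cases g)
    case (Named s) then show ?thesis by (simp add: sk_expansion_def sk_iter_Named)
  next
    case (Sk Q)
    have sz: "size g = Suc (size_fm size Q)" using Sk by simp
    obtain k' where k: "k = Suc k'" using less.prems sz by (cases k) auto
    have "(sk_step F P ^^ k') F g' = (sk_step F P ^^ size_fm size Q) F g'"
      if g': "FS g' \<in> fsyms Q" for g'
    proof -
      have "size g' \<le> size_fm size Q" using size_fsyms[OF g'] .
      then show ?thesis using less.hyps[of g'] sz k less.prems by simp
    qed
    then have "sk_witness ((sk_step F P ^^ k') F) P Q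
        = sk_witness ((sk_step F P ^^ size_fm size Q) F) P Q"
      by (rule sk_witness_cong)
    then show ?thesis using Sk k sz by (simp add: sk_step_def sk_expansion_def)
  qed
qed

lemma sk_expansion_Named: "sk_expansion F P (Named s) = F (Named s)"
  by (simp add: sk_expansion_def sk_iter_Named)

lemma sk_expansion_Sk: "sk_expansion F P (Sk Q) xs = sk_witness (sk_expansion F P) P Q"
proof -
  have "sk_expansion F P (Sk Q) xs = sk_witness ((sk_step F P ^^ size_fm size Q) F) P Q"
    by (simp add: sk_expansion_def sk_step_def)
  also have "\<dots> = sk_witness (sk_expansion F P) P Q"
    using size_fsyms sk_iter_stable by (intro sk_witness_cong) blast
  finally show ?thesis .
qed

lemma sk_witness_refutes:
  assumes "fv (All b B) = {}" and "\<not> holds G P \<rho> (All b B)"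
  shows "\<not> holds G P (\<rho>(b := sk_witness G P (All b B))) B"
proof -
  have indep: "holds G P (\<rho>(b := v)) B = holds G P ((\<lambda>_. 0)(b := v)) B" for v
    using assms(1) by (intro holds_cong) auto
  obtain v where "\<not> holds G P (\<rho>(b := v)) B" using assms(2) by auto
  then have "\<not> holds G P ((\<lambda>_. 0)(b := SOME v. \<not> holds G P ((\<lambda>_. 0)(b := v)) B)) B"
    unfolding indep by (rule someI)
  then show ?thesis unfolding indep by (simp add: sk_witness_def)
qed

lemma holds_skt_refutes:
  assumes "F = sk_expansion F0 P" and "fv (fsubst \<sigma> (All x A)) = {}"
    and "\<not> holds F P (\<lambda>y. teval F \<rho> (\<sigma> y)) (All x A)"
  shows "\<not> holds F P (\<lambda>y. teval F \<rho> ((\<sigma>(x := skt \<sigma> (All x A))) y)) A"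
proof -
  let ?b = "bvar \<sigma> x A"
  let ?Q = "fsubst \<sigma> (All x A)"
  let ?w = "sk_witness F P ?Q"
  have Q: "?Q = All ?b (fsubst (\<sigma>(x := Var ?b)) A)" by simp
  have "\<not> holds F P \<rho> ?Q" using assms(3) by (simp only: holds_fsubst not_False_eq_True)
  then have "\<not> holds F P (\<rho>(?b := ?w)) (fsubst (\<sigma>(x := Var ?b)) A)"
    using sk_witness_refutes assms(2) Q by metis
  then have "\<not> holds F P ((\<lambda>y. teval F \<rho> (\<sigma> y))(x := ?w)) A"
    by (simp only: holds_fsubst holds_rename_bvar[OF refl] not_False_eq_True)
  moreover have "teval F \<rho> (skt \<sigma> (All x A)) = ?w"
    using assms(1) by (simp add: skt_def sk_expansion_Sk)
  then have "(\<lambda>y. teval F \<rho> ((\<sigma>(x := skt \<sigma> (All x A))) y)) = (\<lambda>y. teval F \<rho> (\<sigma> y))(x := ?w)"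
    by auto
  ultimately show ?thesis by simp
qed

lemma sk_sound:
  assumes "F = sk_expansion F0 P"
  shows "sk_closed p \<sigma> A \<Longrightarrow> holds F P (\<lambda>y. teval F \<rho> (\<sigma> y)) A = p
    \<Longrightarrow> holds_pol F P p \<rho> (sk p \<sigma> A)"
proof (induction A arbitrary: p \<sigma> \<rho>)
  case (Eq s t) then show ?case by (simp add: teval_tsubst)
next
  case (Rel r ts) then show ?case by (simp add: teval_tsubst comp_def)
next
  case (Neg A)
  have "holds_pol F P (\<not> p) \<rho> (sk (\<not> p) \<sigma> A)"
    by (rule Neg.IH) (use Neg.prems in auto)
  then show ?case by simp
next
  case (Conj A B) then show ?case by (cases p) auto
next
  case (Disj A B) then show ?case by (cases p) auto
next
  case (Imp A B) then show ?case by (cases p) auto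
next
  case (All x A)
  show ?case
  proof (cases p)
    case True
    let ?b = "bvar \<sigma> x A"
    have "holds_pol F P p (\<rho>(?b := v)) (sk p (\<sigma>(x := Var ?b)) A)" for v
    proof (rule All.IH)
      show "sk_closed p (\<sigma>(x := Var ?b)) A" using All.prems True by simp
      show "holds F P (\<lambda>y. teval F (\<rho>(?b := v)) ((\<sigma>(x := Var ?b)) y)) A = p"
        using All.prems True holds_rename_bvar[OF refl, where \<rho> = \<rho> and v = v] by simp
    qed
    then show ?thesis using True by simp
  next
    case False
    have "holds_pol F P p \<rho> (sk p (\<sigma>(x := skt \<sigma> (All x A))) A)"
    proof (rule All.IH)
      show "sk_closed p (\<sigma>(x := skt \<sigma> (All x A))) A" using All.prems False by simp
      show "holds F P (\<lambda>y. teval F \<rho> ((\<sigma>(x := skt \<sigma> (All x A))) y)) A = p"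
        using holds_skt_refutes[OF assms] All.prems False by simp
    qed
    then show ?thesis using False by simp
  qed
qed simp_all

lemma csat_CNF_skE:
  assumes "sk_closed True Var A" and "\<And>\<rho>. holds (sk_expansion F P) P \<rho> A"
    and "C \<in> CNF (skE A)"
  shows "csat UNIV (sk_expansion F P) P C"
proof (rule csat_CNF[OF _ assms(3)])
  fix \<rho>
  show "holds_pol (sk_expansion F P) P True \<rho> (skE A)"
    unfolding skE_def using assms(1,2) by (intro sk_sound[OF refl]) simp_all
qed

lemma derivable_by_rule: "(\<C>, \<B>) \<in> \<S> \<Longrightarrow> C \<in> \<B> \<Longrightarrow> derivable \<S> \<C> C"
  unfolding derivable_def deduction_def
  by (intro exI[of _ "[\<C>, \<C> \<union> \<B>]"]) (auto simp: nth_Cons split: nat.splits)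

lemma deduction_preserves_model:
  assumes "sound \<S>" and "is_struct D F"
    and rules: "\<forall>(\<C>, \<B>) \<in> \<R>. \<forall>C \<in> \<B>. csat D F P C"
    and Ds: "deduction (\<S> \<union> \<R>) \<C>0 Ds" and init: "\<And>C. C \<in> \<C>0 \<Longrightarrow> csat D F P C"
  shows "i < length Ds \<Longrightarrow> C \<in> Ds ! i \<Longrightarrow> csat D F P C"
proof (induction i arbitrary: C)
  case 0
  then show ?case using Ds init unfolding deduction_def by (metis hd_conv_nth)
next
  case (Suc i)
  obtain \<B> where \<B>: "(Ds ! i, \<B>) \<in> \<S> \<union> \<R>" "Ds ! Suc i = Ds ! i \<union> \<B>"
    using Ds Suc.prems unfolding deduction_def by blast
  show ?case
  proof (cases "C \<in> Ds ! i")
    case False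
    then have "C \<in> \<B>" using Suc.prems \<B>(2) by simp
    show ?thesis
    proof (cases "(Ds ! i, \<B>) \<in> \<S>")
      case True
      then have "entails (Ds ! i) C"
        using \<open>sound \<S>\<close> derivable_by_rule \<open>C \<in> \<B>\<close> unfolding sound_def by blast
      then show ?thesis using Suc \<open>is_struct D F\<close> unfolding entails_def by simp
    next
      case False
      then show ?thesis using \<B>(1) rules \<open>C \<in> \<B>\<close> by fast
    qed
  qed (use Suc in simp)
qed

lemma not_refutes_if_model:
  assumes "sound \<S>" and "is_struct D F"
    and "\<And>C. C \<in> \<C>0 \<Longrightarrow> csat D F P C"
    and "\<And>\<C> \<B> C. (\<C>, \<B>) \<in> \<R> \<Longrightarrow> C \<in> \<B> \<Longrightarrow> csat D F P C"
  shows "\<not> refutes (\<S> \<union> \<R>) \<C>0"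
proof
  assume "refutes (\<S> \<union> \<R>) \<C>0"
  then obtain Ds where Ds: "deduction (\<S> \<union> \<R>) \<C>0 Ds" and "{||} \<in> last Ds"
    unfolding refutes_def derivable_def by blast
  then have "Ds \<noteq> []" "{||} \<in> Ds ! (length Ds - 1)"
    unfolding deduction_def by (simp_all add: last_conv_nth)
  moreover have "\<forall>(\<C>, \<B>) \<in> \<R>. \<forall>C \<in> \<B>. csat D F P C" using assms(4) by blast
  ultimately have "csat D F P {||}"
    using deduction_preserves_model[OF assms(1,2) _ Ds assms(3), where i = "length Ds - 1"] by simp
  moreover obtain d where "d \<in> D" using \<open>is_struct D F\<close> unfolding is_struct_def by blast
  then have "range (\<lambda>_. d) \<subseteq> D" by auto
  ultimately show False unfolding csat_def by fastforce
qed

section \<open>A nonstandard model of \<open>T'\<close>\<close>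

text \<open>The triple \<open>(a, k, r)\<close> encodes \<open>a X + k / m + r \<tau>\<close>; the standard number \<open>n\<close> is \<open>(0, m n, 0)\<close>.
  Then \<open>m (X + \<tau>) = m X\<close> refutes \<open>C\<^sub>m\<close>, and \<open>s\<^sup>n (m X) = m (X + n / m)\<close> refutes \<open>D\<^sub>m\<^sub>,\<^sub>n\<close>.\<close>

type_synonym tri = "int \<times> int \<times> int"

fun in_model :: "nat \<Rightarrow> tri \<Rightarrow> bool" where
  "in_model m (a, k, r) \<longleftrightarrow>
     0 \<le> a \<and> 0 \<le> r \<and> r < int m \<and> (a = 0 \<longrightarrow> r = 0 \<and> 0 \<le> k \<and> int m dvd k)"

definition m_zero :: tri where
  "m_zero = (0, 0, 0)"

fun m_suc :: "nat \<Rightarrow> tri \<Rightarrow> tri" where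
  "m_suc m (a, k, r) = (a, k + int m, r)"

fun m_pre :: "nat \<Rightarrow> tri \<Rightarrow> tri" where
  "m_pre m (a, k, r) = (if a = 0 \<and> k = 0 then (a, k, r) else (a, k - int m, r))"

fun m_add :: "nat \<Rightarrow> tri \<Rightarrow> tri \<Rightarrow> tri" where
  "m_add m (a, k, r) (a', k', r') = (a + a', k + k', (r + r') mod int m)"

fun m_mul :: "nat \<Rightarrow> nat \<Rightarrow> tri \<Rightarrow> tri" where
  "m_mul m 0 v = m_zero"
| "m_mul m (Suc 0) v = v"
| "m_mul m (Suc (Suc j)) v = m_add m v (m_mul m (Suc j) v)"

lemma in_model_m_zero [simp]: "0 < m \<Longrightarrow> in_model m m_zero"
  by (simp add: m_zero_def)

lemma in_model_m_suc [simp]: "in_model m v \<Longrightarrow> in_model m (m_suc m v)"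
  by (cases v) auto

lemma in_model_m_pre [simp]: "in_model m v \<Longrightarrow> in_model m (m_pre m v)"
  by (cases v) (auto simp: dvd_diff dest: zdvd_imp_le)

lemma in_model_m_add [simp]: "0 < m \<Longrightarrow> in_model m v \<Longrightarrow> in_model m w \<Longrightarrow> in_model m (m_add m v w)"
  by (cases v; cases w) auto

lemma m_zero_neq_suc: "in_model m v \<Longrightarrow> 0 < m \<Longrightarrow> m_zero \<noteq> m_suc m v"
  by (cases v) (auto simp: m_zero_def)

lemma m_pre_zero: "m_pre m m_zero = m_zero"
  by (simp add: m_zero_def)

lemma m_pre_suc: "in_model m v \<Longrightarrow> 0 < m \<Longrightarrow> m_pre m (m_suc m v) = v"
  by (cases v) auto

lemma m_add_zero: "in_model m v \<Longrightarrow> m_add m v m_zero = v"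
  by (cases v) (auto simp: m_zero_def)

lemma m_add_suc: "m_add m v (m_suc m w) = m_suc m (m_add m v w)"
  by (cases v; cases w) auto

lemma m_suc_pre: "in_model m v \<Longrightarrow> v \<noteq> m_zero \<Longrightarrow> m_suc m (m_pre m v) = v"
  by (cases v) (auto simp: m_zero_def)

lemma m_add_commute: "m_add m v w = m_add m w v"
  by (cases v; cases w) (auto simp: add.commute)

lemma m_add_assoc: "m_add m (m_add m u v) w = m_add m u (m_add m v w)"
  by (cases u; cases v; cases w) (auto simp: mod_add_left_eq mod_add_right_eq add.assoc)

lemma m_add_left_cancel:
  assumes "m_add m u w = m_add m u w'" and "in_model m w" "in_model m w'"
  shows "w = w'"
proof -
  obtain a k r a' k' r' b l s where
    v: "w = (a, k, r)" "w' = (a', k', r')" "u = (b, l, s)"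
    by (cases w; cases w'; cases u) auto
  have "(s + r) mod int m = (s + r') mod int m" using assms(1) v by simp
  then have "((s + r) - s) mod int m = ((s + r') - s) mod int m" by (rule mod_diff_cong) simp
  then have "r mod int m = r' mod int m" by simp
  moreover have "r mod int m = r" "r' mod int m = r'" using assms(2,3) v by simp_all
  moreover have "a = a'" "k = k'" using assms(1) v by simp_all
  ultimately show ?thesis using v by simp
qed

lemma m_mul_eq:
  "0 \<le> r \<Longrightarrow> r < int m \<Longrightarrow> m_mul m j (a, k, r) = (int j * a, int j * k, (int j * r) mod int m)"
  by (induction m j "(a, k, r)" rule: m_mul.induct)
     (simp_all add: m_zero_def mod_add_right_eq algebra_simps)

lemma m_suc_pow: "(m_suc m ^^ n) (a, k, r) = (a, k + int n * int m, r)"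
  by (induction n) (auto simp: algebra_simps)

lemma in_model_standardE:
  assumes "0 < m" and "in_model m (0, k, r)"
  obtains n where "k = int n * int m" and "r = 0"
proof -
  from assms(2) obtain q where q: "k = int m * q" and "0 \<le> k" "r = 0" by (auto elim: dvdE)
  then have "0 \<le> q" using assms(1) by (simp add: zero_le_mult_iff)
  then obtain n where "q = int n" using nonneg_int_cases by blast
  with q \<open>r = 0\<close> show ?thesis by (metis mult.commute that)
qed

text \<open>Structures have domain \<open>\<nat>\<close>, so the model is transported along a bijection between \<open>\<nat>\<close>
  and the countably infinite set of triples satisfying \<open>in_model m\<close>.\<close>

definition tri_of :: "nat \<Rightarrow> nat \<Rightarrow> tri" where
  "tri_of m = from_nat_into {v. in_model m v}"

definition nat_of :: "nat \<Rightarrow> tri \<Rightarrow> nat" where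
  "nat_of m = to_nat_on {v. in_model m v}"

definition model_op :: "nat \<Rightarrow> sym \<Rightarrow> tri list \<Rightarrow> tri" where
  "model_op m g vs =
    (if g = Named ''s'' then m_suc m (nth_default m_zero vs 0)
     else if g = Named ''p'' then m_pre m (nth_default m_zero vs 0)
     else if g = Named ''+'' then m_add m (nth_default m_zero vs 0) (nth_default m_zero vs 1)
     else m_zero)"

definition model_fns :: "nat \<Rightarrow> sym \<Rightarrow> nat list \<Rightarrow> nat" where
  "model_fns m = sk_expansion (\<lambda>g us. nat_of m (model_op m g (map (tri_of m) us))) (\<lambda>_ _. False)"

abbreviation model_teval :: "nat \<Rightarrow> (nat \<Rightarrow> nat) \<Rightarrow> sym trm \<Rightarrow> nat" where
  "model_teval m \<equiv> teval (model_fns m)"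

abbreviation model_holds :: "nat \<Rightarrow> (nat \<Rightarrow> nat) \<Rightarrow> sym fm \<Rightarrow> bool" where
  "model_holds m \<equiv> holds (model_fns m) (\<lambda>_ _. False)"

lemma countable_model: "countable {v. in_model m v}"
  by (rule countable_subset[of _ UNIV]) auto

lemma infinite_model:
  assumes "0 < m"
  shows "infinite {v. in_model m v}"
proof -
  have "range (\<lambda>j::nat. (1::int, int j, 0::int)) \<subseteq> {v. in_model m v}" using assms by auto
  moreover have "inj (\<lambda>j::nat. (1::int, int j, 0::int))" by (auto simp: inj_def)
  ultimately show ?thesis using infinite_iff_countable_subset by blast
qed

context
  fixes m :: nat
  assumes m_pos: "0 < m"
begin

lemma in_model_tri_of [simp]: "in_model m (tri_of m n)"
  unfolding tri_of_def
  using from_nat_into[of "{v. in_model m v}"] in_model_m_zero[OF m_pos] by blast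

lemma nat_of_tri_of [simp]: "nat_of m (tri_of m n) = n"
  unfolding tri_of_def nat_of_def by (simp add: countable_model infinite_model[OF m_pos])

lemma tri_of_nat_of [simp]: "in_model m v \<Longrightarrow> tri_of m (nat_of m v) = v"
  unfolding tri_of_def nat_of_def by (simp add: countable_model)

lemma tri_of_inject: "tri_of m u = tri_of m w \<longleftrightarrow> u = w"
  by (metis nat_of_tri_of)

lemma in_model_model_op [simp]: "\<forall>v\<in>set vs. in_model m v \<Longrightarrow> in_model m (model_op m g vs)"
  using m_pos by (simp add: model_op_def nth_default_def)

lemma tri_of_teval_Named:
  "tri_of m (model_teval m \<rho> (Fn (Named s) ts))
     = model_op m (Named s) (map (\<lambda>u. tri_of m (model_teval m \<rho> u)) ts)"
  by (simp add: model_fns_def sk_expansion_Named comp_def)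

lemma tri_of_teval_zero [simp]: "tri_of m (model_teval m \<rho> zero) = m_zero"
  using tri_of_teval_Named[of _ "''0''" "[]"] by (simp add: zero_def model_op_def)

lemma tri_of_teval_suc [simp]:
  "tri_of m (model_teval m \<rho> (suc t)) = m_suc m (tri_of m (model_teval m \<rho> t))"
  using tri_of_teval_Named[of _ "''s''" "[t]"] by (simp add: suc_def model_op_def)

lemma tri_of_teval_pre [simp]:
  "tri_of m (model_teval m \<rho> (pre t)) = m_pre m (tri_of m (model_teval m \<rho> t))"
  using tri_of_teval_Named[of _ "''p''" "[t]"] by (simp add: pre_def model_op_def)

lemma tri_of_teval_plus [simp]:
  "tri_of m (model_teval m \<rho> (plus t u))
     = m_add m (tri_of m (model_teval m \<rho> t)) (tri_of m (model_teval m \<rho> u))"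
  using tri_of_teval_Named[of _ "''+''" "[t, u]"] by (simp add: plus_def model_op_def)

lemma tri_of_teval_mul [simp]:
  "tri_of m (model_teval m \<rho> (mul j t)) = m_mul m j (tri_of m (model_teval m \<rho> t))"
  by (induction j t rule: mul.induct) simp_all

lemma tri_of_teval_sucs [simp]:
  "tri_of m (model_teval m \<rho> (sucs n t)) = (m_suc m ^^ n) (tri_of m (model_teval m \<rho> t))"
  by (induction n) (simp_all add: sucs_def)

lemma model_holds_Eq:
  "model_holds m \<rho> (Eq s t) \<longleftrightarrow> tri_of m (model_teval m \<rho> s) = tri_of m (model_teval m \<rho> t)"
  by (simp add: tri_of_inject)

lemma model_T'_axioms: "A \<in> T'_axioms \<Longrightarrow> model_holds m \<rho> A"
  unfolding T'_axioms_def T_axioms_def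
  using m_pos
  by (auto simp del: holds.simps(2) simp: model_holds_Eq m_zero_neq_suc m_pre_zero m_pre_suc
      m_add_zero m_add_suc m_suc_pre m_add_assoc
      intro: m_add_commute dest: m_add_left_cancel[OF _ in_model_tri_of in_model_tri_of])

lemma model_neg_C:
  assumes "2 \<le> m"
  shows "model_holds m \<rho> (Neg (C_fm m))"
proof -
  let ?\<rho> = "\<rho>(0 := nat_of m (1, 0, 1), 1 := nat_of m (1, 0, 0))"
  have "\<not> model_holds m ?\<rho> (Imp (Eq (mul m vx) (mul m vy)) (Eq vx vy))"
    using assms m_pos by (simp del: holds.simps(2) add: model_holds_Eq m_mul_eq)
  then show ?thesis unfolding C_fm_def by auto
qed

lemma model_neg_D: "model_holds m \<rho> (Neg (D_fm m n))"
proof -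
  let ?\<rho> = "\<rho>(0 := nat_of m (1, 0, 0), 1 := nat_of m (1, int n, 0))"
  have "\<not> model_holds m ?\<rho> (Neg (Eq (sucs n (mul m vx)) (mul m vy)))"
    using m_pos by (simp del: holds.simps(2) add: model_holds_Eq m_mul_eq m_suc_pow)
  then show ?thesis unfolding D_fm_def by auto
qed

end

section \<open>Open induction in the model\<close>

fun affine :: "nat \<Rightarrow> nat \<Rightarrow> tri \<Rightarrow> tri \<Rightarrow> tri" where
  "affine m \<alpha> (a, k, r) (ca, ck, cr) = (int \<alpha> * a + ca, int \<alpha> * k + ck, (int \<alpha> * r + cr) mod int m)"

fun large :: "int \<Rightarrow> tri \<Rightarrow> bool" where
  "large N (a, k, r) \<longleftrightarrow> 1 \<le> a \<or> N \<le> k"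

text \<open>The only non-affine operation of the model is the truncation of \<open>m_pre\<close> at zero; it
  does not occur on large elements as long as the constant part of the \<open>X\<close>-coefficient is
  nonnegative.\<close>

definition eventually_affine :: "nat \<Rightarrow> (tri \<Rightarrow> tri) \<Rightarrow> bool" where
  "eventually_affine m f \<longleftrightarrow> (\<exists>\<alpha> ca ck cr N. 0 \<le> ca \<and>
     (\<forall>v. in_model m v \<and> large N v \<longrightarrow> f v = affine m \<alpha> v (ca, ck, cr)))"

lemma eventually_affineI:
  assumes "0 \<le> ca" and "\<And>v. in_model m v \<Longrightarrow> large N v \<Longrightarrow> f v = affine m \<alpha> v (ca, ck, cr)"
  shows "eventually_affine m f"
  unfolding eventually_affine_def using assms by blast

lemma eventually_affineE:
  assumes "eventually_affine m f"
  obtains \<alpha> ca ck cr N where "0 \<le> ca"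
    and "\<And>v. in_model m v \<Longrightarrow> large N v \<Longrightarrow> f v = affine m \<alpha> v (ca, ck, cr)"
  using assms unfolding eventually_affine_def by blast

lemma large_mono: "large N v \<Longrightarrow> N' \<le> N \<Longrightarrow> large N' v"
  by (cases v) auto

text \<open>On every line \<open>{(a, k, r) | k \<in> \<int>}\<close>, the large elements satisfy \<open>\<phi>(x)\<close> with one and the
  same truth value \<open>V\<close>, up to finitely many exceptions.\<close>

definition exceptions :: "nat \<Rightarrow> (nat \<Rightarrow> nat) \<Rightarrow> nat \<Rightarrow> sym fm \<Rightarrow> int \<Rightarrow> bool \<Rightarrow> int \<Rightarrow> int \<Rightarrow> int set"
  where "exceptions m \<rho> x \<phi> N V a r = {k. in_model m (a, k, r) \<and> large N (a, k, r) \<and>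
    model_holds m (\<rho>(x := nat_of m (a, k, r))) \<phi> \<noteq> V}"

definition almost_constant :: "nat \<Rightarrow> (nat \<Rightarrow> nat) \<Rightarrow> nat \<Rightarrow> sym fm \<Rightarrow> bool" where
  "almost_constant m \<rho> x \<phi> \<longleftrightarrow> (\<exists>N V. \<forall>a r. finite (exceptions m \<rho> x \<phi> N V a r))"

lemma almost_constant_if_constant:
  assumes "\<And>\<rho>'. model_holds m \<rho>' \<phi> = V"
  shows "almost_constant m \<rho> x \<phi>"
proof -
  have "exceptions m \<rho> x \<phi> 0 V a r = {}" for a r
    using assms by (simp add: exceptions_def)
  then show ?thesis unfolding almost_constant_def by (metis finite.emptyI)
qed

lemma almost_constant_Neg: "almost_constant m \<rho> x \<phi> \<Longrightarrow> almost_constant m \<rho> x (Neg \<phi>)"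
proof -
  assume "almost_constant m \<rho> x \<phi>"
  then obtain N V where "\<And>a r. finite (exceptions m \<rho> x \<phi> N V a r)"
    unfolding almost_constant_def by blast
  moreover have "exceptions m \<rho> x (Neg \<phi>) N (\<not> V) a r = exceptions m \<rho> x \<phi> N V a r" for a r
    unfolding exceptions_def by auto
  ultimately show ?thesis unfolding almost_constant_def by metis
qed

lemma almost_constant_binop:
  assumes "almost_constant m \<rho> x \<phi>" and "almost_constant m \<rho> x \<psi>"
    and "\<And>\<rho>'. model_holds m \<rho>' \<chi> = f (model_holds m \<rho>' \<phi>) (model_holds m \<rho>' \<psi>)"
  shows "almost_constant m \<rho> x \<chi>"
proof -
  obtain N V where \<phi>: "\<And>a r. finite (exceptions m \<rho> x \<phi> N V a r)"
    using assms(1) unfolding almost_constant_def by blast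
  obtain N' V' where \<psi>: "\<And>a r. finite (exceptions m \<rho> x \<psi> N' V' a r)"
    using assms(2) unfolding almost_constant_def by blast
  have "exceptions m \<rho> x \<chi> (max N N') (f V V') a r
      \<subseteq> exceptions m \<rho> x \<phi> N V a r \<union> exceptions m \<rho> x \<psi> N' V' a r" for a r
  proof
    fix k
    assume k: "k \<in> exceptions m \<rho> x \<chi> (max N N') (f V V') a r"
    let ?\<rho> = "\<rho>(x := nat_of m (a, k, r))"
    have "model_holds m ?\<rho> \<chi> \<noteq> f V V'" using k by (simp add: exceptions_def)
    then have "model_holds m ?\<rho> \<phi> \<noteq> V \<or> model_holds m ?\<rho> \<psi> \<noteq> V'"
      using assms(3)[of ?\<rho>] by metis
    moreover have "in_model m (a, k, r)" "large N (a, k, r)" "large N' (a, k, r)"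
      using k by (auto simp: exceptions_def)
    ultimately show "k \<in> exceptions m \<rho> x \<phi> N V a r \<union> exceptions m \<rho> x \<psi> N' V' a r"
      unfolding exceptions_def by blast
  qed
  then have "finite (exceptions m \<rho> x \<chi> (max N N') (f V V') a r)" for a r
    using \<phi> \<psi> by (meson finite_UnI finite_subset)
  then show ?thesis unfolding almost_constant_def by blast
qed

lemma finite_affine_solutions:
  fixes A B c d :: int
  assumes "A \<noteq> B"
  shows "finite {k. A * k + c = B * k + d}"
proof -
  have "{k. A * k + c = B * k + d} \<subseteq> {(d - c) div (A - B)}"
  proof
    fix k
    assume "k \<in> {k. A * k + c = B * k + d}"
    then have "(A - B) * k = d - c" by (simp add: algebra_simps)
    then have "(d - c) div (A - B) = k"
      using assms by (metis nonzero_mult_div_cancel_left right_minus_eq)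
    then show "k \<in> {(d - c) div (A - B)}" by simp
  qed
  then show ?thesis by (rule finite_subset) simp
qed

lemma infinite_if_arith_prog_subset:
  fixes c d :: int
  assumes "d \<noteq> 0" and "range (\<lambda>j::nat. c + int j * d) \<subseteq> S"
  shows "infinite S"
proof -
  have "inj (\<lambda>j::nat. c + int j * d)" using assms(1) by (auto simp: inj_def)
  then show ?thesis using assms(2) infinite_iff_countable_subset by blast
qed

context
  fixes m :: nat
  assumes m_pos: "0 < m"
begin

lemma eventually_affine_const:
  assumes "in_model m c"
  shows "eventually_affine m (\<lambda>_. c)"
proof -
  obtain ca ck cr where c: "c = (ca, ck, cr)" by (cases c)
  show ?thesis using assms unfolding c
    by (intro eventually_affineI[where \<alpha> = 0 and ca = ca and ck = ck and cr = cr and N = 0]) auto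
qed

lemma eventually_affine_var: "eventually_affine m (\<lambda>v. tri_of m (nat_of m v))"
proof (rule eventually_affineI[where \<alpha> = 1 and ca = 0 and ck = 0 and cr = 0 and N = 0])
  fix v
  assume "in_model m v"
  then show "tri_of m (nat_of m v) = affine m 1 v (0, 0, 0)" by (cases v) simp
qed simp

lemma eventually_affine_suc:
  assumes "eventually_affine m f"
  shows "eventually_affine m (\<lambda>v. m_suc m (f v))"
proof -
  obtain \<alpha> ca ck cr N where "0 \<le> ca"
    and f: "\<And>v. in_model m v \<Longrightarrow> large N v \<Longrightarrow> f v = affine m \<alpha> v (ca, ck, cr)"
    using assms(1) by (elim eventually_affineE) blast
  have "m_suc m (f v) = affine m \<alpha> v (ca, ck + int m, cr)" if "in_model m v" "large N v" for v
    using f[OF that] by (cases v) simp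
  with \<open>0 \<le> ca\<close> show ?thesis by (rule eventually_affineI)
qed

lemma eventually_affine_add:
  assumes "eventually_affine m f" and "eventually_affine m g"
  shows "eventually_affine m (\<lambda>v. m_add m (f v) (g v))"
proof -
  obtain \<alpha> ca ck cr N where "0 \<le> ca"
    and f: "\<And>v. in_model m v \<Longrightarrow> large N v \<Longrightarrow> f v = affine m \<alpha> v (ca, ck, cr)"
    using assms(1) by (elim eventually_affineE) blast
  obtain \<beta> da dk dr N' where "0 \<le> da"
    and g: "\<And>v. in_model m v \<Longrightarrow> large N' v \<Longrightarrow> g v = affine m \<beta> v (da, dk, dr)"
    using assms(2) by (elim eventually_affineE) blast
  have "m_add m (f v) (g v) = affine m (\<alpha> + \<beta>) v (ca + da, ck + dk, cr + dr)"
    if "in_model m v" "large (max N N') v" for v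
  proof -
    obtain a k r where v: "v = (a, k, r)" by (cases v)
    have "large N v" "large N' v" using that(2) large_mono by auto
    then show ?thesis
      using f[OF that(1)] g[OF that(1)] v by (simp add: mod_add_eq algebra_simps)
  qed
  moreover have "0 \<le> ca + da" using \<open>0 \<le> ca\<close> \<open>0 \<le> da\<close> by simp
  ultimately show ?thesis by (intro eventually_affineI)
qed

lemma m_pre_affine:
  assumes "\<alpha> \<noteq> 0" and "0 \<le> ca" and "in_model m v" and "large (\<bar>ck\<bar> + 1) v"
  shows "m_pre m (affine m \<alpha> v (ca, ck, cr)) = affine m \<alpha> v (ca, ck - int m, cr)"
proof -
  obtain a k r where v: "v = (a, k, r)" by (cases v)
  have "int \<alpha> * a + ca \<noteq> 0 \<or> int \<alpha> * k + ck \<noteq> 0"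
  proof (cases "a = 0")
    case True
    then have "\<bar>ck\<bar> + 1 \<le> k" using assms(4) v by simp
    moreover have "k \<le> int \<alpha> * k"
      using assms(1) mult_right_mono[of 1 "int \<alpha>" k] calculation by simp
    ultimately show ?thesis by linarith
  next
    case False
    then have "0 < int \<alpha> * a" using assms(1,3) v by simp
    then show ?thesis using assms(2) by linarith
  qed
  then show ?thesis using v by auto
qed

lemma eventually_affine_pre:
  assumes "eventually_affine m f"
  shows "eventually_affine m (\<lambda>v. m_pre m (f v))"
proof -
  obtain \<alpha> ca ck cr N where "0 \<le> ca"
    and f: "\<And>v. in_model m v \<Longrightarrow> large N v \<Longrightarrow> f v = affine m \<alpha> v (ca, ck, cr)"
    using assms(1) by (elim eventually_affineE) blast
  show ?thesis
  proof (cases "\<alpha> = 0")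
    case True
    define ck' where "ck' = (if ca = 0 \<and> ck = 0 then ck else ck - int m)"
    have "m_pre m (f v) = affine m 0 v (ca, ck', cr)" if "in_model m v" "large N v" for v
      using f[OF that] True by (cases v) (simp add: ck'_def)
    with \<open>0 \<le> ca\<close> show ?thesis by (rule eventually_affineI)
  next
    case False
    have "m_pre m (f v) = affine m \<alpha> v (ca, ck - int m, cr)"
      if "in_model m v" "large (max N (\<bar>ck\<bar> + 1)) v" for v
      using f[OF that(1)] m_pre_affine[OF False \<open>0 \<le> ca\<close> that(1)] that(2) large_mono by simp
    with \<open>0 \<le> ca\<close> show ?thesis by (rule eventually_affineI)
  qed
qed

lemma eventually_affine_nth_default:
  assumes "\<And>u. u \<in> set us \<Longrightarrow> eventually_affine m (\<lambda>v. g v u)"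
  shows "eventually_affine m (\<lambda>v. nth_default m_zero (map (g v) us) i)"
proof (cases "i < length us")
  case True
  then show ?thesis using assms[of "us ! i"] by (simp add: nth_default_def)
next
  case False
  then show ?thesis using eventually_affine_const[of m_zero] m_pos by (simp add: nth_default_def)
qed

lemma eventually_affine_model_op:
  assumes "\<And>u. u \<in> set us \<Longrightarrow> eventually_affine m (\<lambda>v. g v u)"
  shows "eventually_affine m (\<lambda>v. model_op m h (map (g v) us))"
proof -
  have arg: "eventually_affine m (\<lambda>v. nth_default m_zero (map (g v) us) i)" for i
    using assms by (rule eventually_affine_nth_default)
  show ?thesis
    unfolding model_op_def
    using eventually_affine_suc[OF arg] eventually_affine_pre[OF arg]
      eventually_affine_add[OF arg arg] eventually_affine_const[OF in_model_m_zero[OF m_pos]]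
    by (cases "h = Named ''s''"; cases "h = Named ''p''"; cases "h = Named ''+''") simp_all
qed

lemma eventually_affine_teval:
  "eventually_affine m (\<lambda>v. tri_of m (model_teval m (\<rho>(x := nat_of m v)) t))"
proof (induction t)
  case (Var y)
  show ?case
  proof (cases "y = x")
    case True
    then show ?thesis using eventually_affine_var by simp
  next
    case False
    then show ?thesis using eventually_affine_const m_pos by simp
  qed
next
  case (Fn g ts)
  show ?case
  proof (cases g)
    case (Named s)
    have "eventually_affine m
        (\<lambda>v. model_op m g (map (\<lambda>u. tri_of m (model_teval m (\<rho>(x := nat_of m v)) u)) ts))"
      using Fn.IH by (rule eventually_affine_model_op)
    then show ?thesis using Named by (simp only: tri_of_teval_Named[OF m_pos])
  next
    case (Sk Q)
    then show ?thesis
      using eventually_affine_const m_pos by (simp add: model_fns_def sk_expansion_Sk)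
  qed
qed

lemma almost_constant_Eq: "almost_constant m \<rho> x (Eq s t)"
proof -
  obtain \<alpha> ca ck cr N where s: "\<And>v. in_model m v \<Longrightarrow> large N v
      \<Longrightarrow> tri_of m (model_teval m (\<rho>(x := nat_of m v)) s) = affine m \<alpha> v (ca, ck, cr)"
    using eventually_affine_teval[of \<rho> x s] by (elim eventually_affineE) blast
  obtain \<beta> da dk dr N' where t: "\<And>v. in_model m v \<Longrightarrow> large N' v
      \<Longrightarrow> tri_of m (model_teval m (\<rho>(x := nat_of m v)) t) = affine m \<beta> v (da, dk, dr)"
    using eventually_affine_teval[of \<rho> x t] by (elim eventually_affineE) blast
  have Eq_iff: "model_holds m (\<rho>(x := nat_of m v)) (Eq s t)
      \<longleftrightarrow> affine m \<alpha> v (ca, ck, cr) = affine m \<beta> v (da, dk, dr)"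
    if "in_model m v" "large (max N N') v" for v
    using s[OF that(1)] t[OF that(1)] that(2) large_mono[of "max N N'" v]
    by (simp del: holds.simps add: model_holds_Eq[OF m_pos])
  show ?thesis
  proof (cases "\<alpha> = \<beta>")
    case True
    let ?V = "ca = da \<and> ck = dk \<and> cr mod int m = dr mod int m"
    have "exceptions m \<rho> x (Eq s t) (max N N') ?V a r = {}" for a r
      using Eq_iff True by (auto simp: exceptions_def mod_eq_dvd_iff)
    then show ?thesis unfolding almost_constant_def by (metis finite.emptyI)
  next
    case False
    have "exceptions m \<rho> x (Eq s t) (max N N') False a r \<subseteq> {k. int \<alpha> * k + ck = int \<beta> * k + dk}"
      for a r
      using Eq_iff by (auto simp: exceptions_def)
    then show ?thesis
      unfolding almost_constant_def using finite_affine_solutions[of "int \<alpha>" "int \<beta>"] False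
      by (meson finite_subset of_nat_eq_iff)
  qed
qed

lemma almost_constant_qfree: "qfree \<phi> \<Longrightarrow> almost_constant m \<rho> x \<phi>"
proof (induction \<phi>)
  case Bot show ?case by (rule almost_constant_if_constant[where V = False]) simp
next
  case (Eq s t) show ?case by (rule almost_constant_Eq)
next
  case (Rel r ts) show ?case by (rule almost_constant_if_constant[where V = False]) simp
next
  case (Neg A) then show ?case using almost_constant_Neg by simp
next
  case (Conj A B)
  then have "almost_constant m \<rho> x A" "almost_constant m \<rho> x B" by simp_all
  then show ?case by (rule almost_constant_binop[where f = "(\<and>)"]) simp
next
  case (Disj A B)
  then have "almost_constant m \<rho> x A" "almost_constant m \<rho> x B" by simp_all
  then show ?case by (rule almost_constant_binop[where f = "(\<or>)"]) simp
next
  case (Imp A B)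
  then have "almost_constant m \<rho> x A" "almost_constant m \<rho> x B" by simp_all
  then show ?case by (rule almost_constant_binop[where f = "(\<longrightarrow>)"]) simp
qed simp_all

lemma model_holds_standard:
  assumes base: "model_holds m (\<rho>(x := nat_of m m_zero)) \<phi>"
    and step: "\<And>w. model_holds m (\<rho>(x := w)) \<phi>
      \<Longrightarrow> model_holds m (\<rho>(x := nat_of m (m_suc m (tri_of m w)))) \<phi>"
  shows "model_holds m (\<rho>(x := nat_of m (0, int n * int m, 0))) \<phi>"
proof (induction n)
  case 0
  have "(0, int 0 * int m, 0) = m_zero" by (simp add: m_zero_def)
  then show ?case using base by (simp only:)
next
  case (Suc n)
  have "m_suc m (0, int n * int m, 0) = (0, int (Suc n) * int m, 0)"
    by (simp add: algebra_simps)
  moreover have "model_holds m (\<rho>(x := nat_of m (m_suc m (0, int n * int m, 0)))) \<phi>"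
    using step[OF Suc] m_pos by simp
  ultimately show ?case by (simp only:)
qed

lemma generic_value_True:
  assumes "\<And>a r. finite (exceptions m \<rho> x \<phi> N V a r)"
    and standard: "\<And>n. model_holds m (\<rho>(x := nat_of m (0, int n * int m, 0))) \<phi>"
  shows V
proof (rule ccontr)
  assume "\<not> V"
  have "range (\<lambda>j. int (nat N) * int m + int j * int m) \<subseteq> exceptions m \<rho> x \<phi> N V 0 0"
  proof safe
    fix j
    have "N \<le> int (nat N + j)" by simp
    also have "\<dots> \<le> int (nat N + j) * int m"
      using m_pos mult_left_mono[of 1 "int m" "int (nat N + j)"] by simp
    finally show "int (nat N) * int m + int j * int m \<in> exceptions m \<rho> x \<phi> N V 0 0"
      using standard[of "nat N + j"] \<open>\<not> V\<close> m_pos by (simp add: exceptions_def algebra_simps)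
  qed
  then have "infinite (exceptions m \<rho> x \<phi> N V 0 0)"
    by (rule infinite_if_arith_prog_subset[rotated]) (use m_pos in simp)
  then show False using assms(1) by blast
qed

lemma model_holds_nonstandard:
  assumes "finite (exceptions m \<rho> x \<phi> N True a r)" and "in_model m (a, k, r)" and "a \<noteq> 0"
    and step: "\<And>w. model_holds m (\<rho>(x := w)) \<phi>
      \<Longrightarrow> model_holds m (\<rho>(x := nat_of m (m_suc m (tri_of m w)))) \<phi>"
  shows "model_holds m (\<rho>(x := nat_of m (a, k, r))) \<phi>"
proof (rule ccontr)
  assume counterexample: "\<not> model_holds m (\<rho>(x := nat_of m (a, k, r))) \<phi>"
  have "\<not> model_holds m (\<rho>(x := nat_of m (a, k - int j * int m, r))) \<phi>" for j
  proof (induction j)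
    case 0
    have "(a, k - int 0 * int m, r) = (a, k, r)" by simp
    then show ?case using counterexample by (simp only: not_False_eq_True)
  next
    case (Suc j)
    let ?v = "(a, k - int (Suc j) * int m, r)"
    have "in_model m ?v" using assms(2,3) by simp
    have eq: "m_suc m ?v = (a, k - int j * int m, r)" by (simp add: algebra_simps)
    show ?case
    proof
      assume "model_holds m (\<rho>(x := nat_of m ?v)) \<phi>"
      then have "model_holds m (\<rho>(x := nat_of m (m_suc m ?v))) \<phi>"
        using step tri_of_nat_of[OF m_pos \<open>in_model m ?v\<close>] by metis
      then show False using Suc unfolding eq by blast
    qed
  qed
  then have "range (\<lambda>j. k + int j * - int m) \<subseteq> exceptions m \<rho> x \<phi> N True a r"
    using assms(2,3) by (auto simp: exceptions_def)
  then have "infinite (exceptions m \<rho> x \<phi> N True a r)"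
    by (rule infinite_if_arith_prog_subset[rotated]) (use m_pos in simp)
  then show False using assms(1) by blast
qed

lemma model_open_induction:
  assumes "qfree \<phi>"
    and base: "model_holds m (\<rho>(x := nat_of m m_zero)) \<phi>"
    and step: "\<And>w. model_holds m (\<rho>(x := w)) \<phi>
      \<Longrightarrow> model_holds m (\<rho>(x := nat_of m (m_suc m (tri_of m w)))) \<phi>"
  shows "model_holds m (\<rho>(x := w)) \<phi>"
proof -
  have standard: "model_holds m (\<rho>(x := nat_of m (0, int n * int m, 0))) \<phi>" for n
    using base step by (rule model_holds_standard)
  obtain N V where fin: "\<And>a r. finite (exceptions m \<rho> x \<phi> N V a r)"
    using almost_constant_qfree[OF assms(1)] unfolding almost_constant_def by blast
  then have V using standard by (rule generic_value_True)
  obtain a k r where w: "w = nat_of m (a, k, r)" and "in_model m (a, k, r)"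
    by (metis in_model_tri_of[OF m_pos] nat_of_tri_of[OF m_pos] prod_cases3)
  show ?thesis
  proof (cases "a = 0")
    case True
    then obtain n where "k = int n * int m" "r = 0"
      using \<open>in_model m (a, k, r)\<close> m_pos in_model_standardE by blast
    then show ?thesis using standard[of n] w True by simp
  next
    case False
    have "finite (exceptions m \<rho> x \<phi> N True a r)" using fin \<open>V\<close> by simp
    then show ?thesis
      using model_holds_nonstandard \<open>in_model m (a, k, r)\<close> False step w by blast
  qed
qed

lemma model_ind_fm:
  assumes "qfree \<phi>" and "\<And>z. z \<in> fv \<phi> - {x} \<Longrightarrow> tvars (\<sigma> z) = {}"
  shows "model_holds m \<rho> (ind_fm x \<phi> \<sigma>)"
proof -
  define \<rho>' where "\<rho>' z = model_teval m \<rho> (\<sigma> z)" for z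
  have subst: "model_holds m \<rho>'' (fsubst (\<sigma>(x := t)) \<phi>)
      = model_holds m (\<rho>'(x := model_teval m \<rho>'' t)) \<phi>" for \<rho>'' t
    unfolding \<rho>'_def by (rule holds_fsubst_params[OF assms(2)])
  have "model_teval m \<rho> zero = nat_of m m_zero"
    by (metis m_pos nat_of_tri_of tri_of_teval_zero)
  moreover have "model_teval m \<rho>'' (suc t) = nat_of m (m_suc m (tri_of m (model_teval m \<rho>'' t)))"
    for \<rho>'' t
    by (metis m_pos nat_of_tri_of tri_of_teval_suc)
  ultimately show ?thesis
    unfolding ind_fm_def using model_open_induction[OF assms(1), of \<rho>' x] by (simp add: subst)
qed

end

lemma sk_closed_T'_axioms: "A \<in> T'_axioms \<Longrightarrow> sk_closed True Var A"
  unfolding T'_axioms_def T_axioms_def by auto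

lemma sk_closed_neg_C: "sk_closed True Var (Neg (C_fm m))"
  by (simp del: fsubst.simps add: C_fm_def fv_fsubst svars_def skt_def tvars_mul sk_closed_qfree)
     auto

lemma sk_closed_neg_D: "sk_closed True Var (Neg (D_fm m n))"
  by (simp del: fsubst.simps
      add: D_fm_def fv_fsubst svars_def skt_def tvars_mul tvars_sucs sk_closed_qfree)

lemma sk_closed_ind_fm:
  assumes "qfree \<phi>" and "\<And>z. z \<in> fv \<phi> - {x} \<Longrightarrow> tvars (\<sigma> z) = {}"
  shows "sk_closed True Var (ind_fm x \<phi> \<sigma>)"
proof -
  let ?Q = "All x (Imp (fsubst (\<sigma>(x := Var x)) \<phi>) (fsubst (\<sigma>(x := suc (Var x))) \<phi>))"
  have "fv (fsubst (\<sigma>(x := Var x)) \<phi>) \<subseteq> {x}" "fv (fsubst (\<sigma>(x := suc (Var x))) \<phi>) \<subseteq> {x}"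
    using assms(2) by (auto simp: fv_fsubst svars_def suc_def split: if_splits)
  then have "fv (fsubst Var ?Q) = {}" by (auto simp: fv_fsubst svars_def)
  then show ?thesis unfolding ind_fm_def
    using assms(1) by (simp del: fsubst.simps add: sk_closed_qfree qfree_fsubst)
qed

lemma csat_model_CNFsk:
  assumes "\<And>A. A \<in> \<Phi> \<Longrightarrow> sk_closed True Var A \<and> (\<forall>\<rho>. model_holds m \<rho> A)" and "C \<in> CNFsk \<Phi>"
  shows "csat UNIV (model_fns m) (\<lambda>_ _. False) C"
  using assms unfolding CNFsk_def model_fns_def by (auto intro: csat_CNF_skE)

lemma csat_model_X: "2 \<le> m \<Longrightarrow> C \<in> X m \<Longrightarrow> csat UNIV (model_fns m) (\<lambda>_ _. False) C"
  unfolding X_def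
  by (rule csat_model_CNFsk)
     (auto simp del: sk_closed.simps holds.simps
       simp: sk_closed_T'_axioms sk_closed_neg_C model_T'_axioms model_neg_C)

lemma csat_model_Y: "0 < m \<Longrightarrow> C \<in> Y m n \<Longrightarrow> csat UNIV (model_fns m) (\<lambda>_ _. False) C"
  unfolding Y_def
  by (rule csat_model_CNFsk)
     (auto simp del: sk_closed.simps holds.simps
       simp: sk_closed_T'_axioms sk_closed_neg_D model_T'_axioms model_neg_D)

lemma csat_model_IND_PF:
  assumes "0 < m" and "\<forall>\<phi>\<in>\<Gamma>. qfree \<phi>" and "(\<C>', \<B>) \<in> IND_PF \<Gamma>" and "C \<in> \<B>"
  shows "csat UNIV (model_fns m) (\<lambda>_ _. False) C"
proof -
  obtain x \<phi> \<sigma> where B: "\<B> = CNF (skE (ind_fm x \<phi> \<sigma>))" and "qfree \<phi>"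
    and ground: "\<And>z. z \<in> fv \<phi> - {x} \<Longrightarrow> tvars (\<sigma> z) = {}"
    using assms(2,3) unfolding IND_PF_def ground_term_of_def by blast
  show ?thesis
    using csat_CNF_skE[OF sk_closed_ind_fm[OF \<open>qfree \<phi>\<close> ground]
        model_ind_fm[OF assms(1) \<open>qfree \<phi>\<close> ground, unfolded model_fns_def]] assms(4) B
    by (simp add: model_fns_def)
qed

theorem theorem4:
  fixes \<S> :: "rule set" and m n :: nat and \<C> :: "clause set"
  assumes "saturation_system \<S>"
    and "sound \<S>"
    and "0 < n" and "n < m"
    and "\<C> = X m \<or> \<C> = Y m n"
  shows "\<not> refutes (\<S> \<union> IND_PF (Open (L \<C>))) \<C>"
proof (rule not_refutes_if_model)
  show "sound \<S>" by fact
  show "is_struct UNIV (model_fns m)" by (simp add: is_struct_def)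
  have "2 \<le> m" using assms(3,4) by simp
  then show "csat UNIV (model_fns m) (\<lambda>_ _. False) C" if "C \<in> \<C>" for C
    using that assms(5) csat_model_X csat_model_Y by auto
  show "csat UNIV (model_fns m) (\<lambda>_ _. False) C" if "(\<C>', \<B>) \<in> IND_PF (Open (L \<C>))" "C \<in> \<B>"
    for \<C>' \<B> C
    by (rule csat_model_IND_PF[OF _ _ that]) (use \<open>2 \<le> m\<close> in \<open>auto simp: Open_def\<close>)
qed

end
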